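(* Let $W$ be a subset of a metric space $(X,d)$ and suppose that the density $\operatorname{den}(W)$ is a cardinal of uncountable cofinality. Then there exists $\varepsilon_0>0$ such that for all $\varepsilon\in\,]0,\varepsilon_0[$, $$\hat{\mathcal N}^X_\varepsilon(W)=\hat{\mathcal N}_\varepsilon(W)=\hat{\mathcal M}_\varepsilon(W)=\mathcal M^*_\varepsilon(W)=\operatorname{den}(W).$$
   Context: $\operatorname{den}(W)$ is the minimal cardinality of a dense subset of the metric subspace $W$. The cofinality of a cardinal (initial ordinal) $\beta$ is the least ordinal $\alpha$ admitting a strictly increasing map $f:\alpha\to\beta$ whose range is cofinal in $\beta$. Closed balls: $B(c,r)=\{x:d(x,c)\le r\}$; $C$ is an $\varepsilon$-net for $W$ if $W\subseteq\bigcup_{c\in C}B(c,\varepsilon)$; $A$ is $\varepsilon$-distinguishable if $d(x,y)>\varepsilon$ for distinct $x,y\in A$. $\hat{\mathcal N}^A_\varepsilon(W)$ is the minimal cardinality of an $\varepsilon$-net $C\subseteq A$ for $W$; $\hat{\mathcal N}_\varepsilon(W):=\hat{\mathcal N}^W_\varepsilon(W)$; $\hat{\mathcal M}_\varepsilon(W)$ is the smallest cardinality of an $\varepsilon$-distinguishable $A\subseteq W$ that is maximal under inclusion among $\varepsilon$-distinguishable subsets of $W$; $\mathcal M^*_\varepsilon(W)$ is the smallest cardinal $\ge\operatorname{card}(A)$ for every $\varepsilon$-distinguishable $A\subseteq W$. *)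

theory Defs
  imports "HOL-Analysis.Analysis"
begin

text \<open>Cardinals are represented by cardinal well-orders card_of (written with bars)
  on sets; equality of cardinals is =o. The metric space X is the whole type 'a.\<close>

definition min_card :: "('a set \<Rightarrow> bool) \<Rightarrow> 'a rel" where
  "min_card P = card_of (SOME C. P C \<and> (\<forall>C'. P C' \<longrightarrow> ordLeq3 (card_of C) (card_of C')))"

definition is_dense_in :: "'a::metric_space set \<Rightarrow> 'a set \<Rightarrow> bool" where
  "is_dense_in D W \<longleftrightarrow> D \<subseteq> W \<and> W \<subseteq> closure D"

definition den :: "'a::metric_space set \<Rightarrow> 'a rel" where
  "den W = min_card (\<lambda>D. is_dense_in D W)"

definition uncountable_cof :: "'a rel \<Rightarrow> bool" where
  "uncountable_cof r \<longleftrightarrow>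
     (\<forall>K. K \<subseteq> Field r \<and> countable K \<longrightarrow> (\<exists>a\<in>Field r. \<forall>b\<in>K. b \<noteq> a \<and> (b, a) \<in> r))"

definition is_net :: "real \<Rightarrow> 'a::metric_space set \<Rightarrow> 'a set \<Rightarrow> bool" where
  "is_net \<epsilon> C W \<longleftrightarrow> W \<subseteq> (\<Union>c\<in>C. cball c \<epsilon>)"

definition distinguishable :: "real \<Rightarrow> 'a::metric_space set \<Rightarrow> bool" where
  "distinguishable \<epsilon> A \<longleftrightarrow> (\<forall>x\<in>A. \<forall>y\<in>A. x \<noteq> y \<longrightarrow> dist x y > \<epsilon>)"

definition Nhat :: "'a::metric_space set \<Rightarrow> real \<Rightarrow> 'a set \<Rightarrow> 'a rel" where
  "Nhat A \<epsilon> W = min_card (\<lambda>C. C \<subseteq> A \<and> is_net \<epsilon> C W)"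

definition Mhat :: "real \<Rightarrow> 'a::metric_space set \<Rightarrow> 'a rel" where
  "Mhat \<epsilon> W = min_card (\<lambda>A. A \<subseteq> W \<and> distinguishable \<epsilon> A \<and>
      (\<forall>B. A \<subseteq> B \<and> B \<subseteq> W \<and> distinguishable \<epsilon> B \<longrightarrow> B = A))"

definition Mstar :: "real \<Rightarrow> 'a::metric_space set \<Rightarrow> 'a rel" where
  "Mstar \<epsilon> W = min_card (\<lambda>S. \<forall>A. A \<subseteq> W \<and> distinguishable \<epsilon> A \<longrightarrow> ordLeq3 (card_of A) (card_of S))"

end

theory Submission
  imports Defs "HOL-Library.Countable_Set_Type"
begin

text \<open>For \<open>\<epsilon> > 0\<close> a maximal \<open>\<epsilon>\<close>-distinguishable subset of \<open>W\<close> exists (Zorn) and is an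
  \<open>\<epsilon>\<close>-net lying in \<open>W\<close>, while every \<open>\<epsilon>\<close>-distinguishable set injects into any dense subset
  of \<open>W\<close>. This yields \<open>N\<^sup>X\<^sub>\<epsilon>(W) \<le> N\<^sub>\<epsilon>(W) \<le> M\<^sub>\<epsilon>(W) \<le> M\<^sup>*\<^sub>\<epsilon>(W) \<le> den W\<close> for every \<open>\<epsilon> > 0\<close>.
  For the reverse inequality, suppose that for every \<open>n\<close> there is a \<open>1/(n+1)\<close>-net of
  cardinality below \<open>den W\<close>. Moving its points to nearby points of \<open>W\<close> gives a dense subset
  of \<open>W\<close> that is a countable union of sets of cardinality below \<open>den W\<close>; by uncountable
  cofinality such a union is smaller than \<open>den W\<close>, which is absurd. So some \<open>\<epsilon>\<^sub>0 = 1/(n+1)\<close>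
  works, and nets for smaller \<open>\<epsilon>\<close> are \<open>\<epsilon>\<^sub>0\<close>-nets as well.\<close>

unbundle cardinal_syntax

lemma min_card_spec:
  assumes "P C"
  shows "\<exists>M. P M \<and> min_card P = |M| \<and> (\<forall>C'. P C' \<longrightarrow> |M| \<le>o |C'| )"
proof -
  have "\<exists>r \<in> {|C| | C. P C}. \<forall>r' \<in> {|C| | C. P C}. r \<le>o r'"
    by (rule exists_minim_Card_order) (use assms card_of_Card_order in auto)
  then have "\<exists>M. P M \<and> (\<forall>C'. P C' \<longrightarrow> |M| \<le>o |C'| )" by blast
  from someI_ex[OF this] show ?thesis unfolding min_card_def by blast
qed

lemma min_card_attained:
  assumes "P C"
  obtains M where "P M" "min_card P = |M|"
  using min_card_spec[of P C, OF assms] that by blast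

lemma min_card_le:
  assumes "P C"
  shows "min_card P \<le>o |C|"
  using min_card_spec[of P C, OF assms] assms by force

subsection \<open>Cardinals of uncountable cofinality\<close>

lemma ordLess_imp_ordLeq_underS:
  assumes "Well_order r" "|B| <o r"
  obtains a where "a \<in> Field r" "|B| \<le>o |underS r a|"
proof -
  obtain a where a: "a \<in> Field r" "ordIso2 |B| (Restr r (underS r a))"
    using assms ordLess_iff_ordIso_Restr card_of_Well_order by blast
  have "|B| \<le>o |Field (Restr r (underS r a))|"
    using card_of_mono2[OF ordIso_imp_ordLeq[OF a(2)]] by (simp add: Field_card_of)
  also have "|Field (Restr r (underS r a))| \<le>o |underS r a|"
    by (rule card_of_mono1[OF Field_Restr_subset])
  finally show ?thesis using that a(1) by blast
qed

lemma uncountable_cof_imp_uncountable: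
  assumes "uncountable_cof |A|"
  shows "uncountable A"
proof
  assume "countable A"
  then obtain a where "a \<in> A" "\<forall>b\<in>A. b \<noteq> a"
    using assms unfolding uncountable_cof_def Field_card_of by blast
  then show False by blast
qed

lemma uncountable_cof_bound:
  fixes A :: "'a set" and D :: "nat \<Rightarrow> 'b set"
  assumes cof: "uncountable_cof |A|" and less: "\<And>n. |D n| <o |A|"
  shows "\<exists>B :: 'a set. |B| <o |A| \<and> (\<forall>n. |D n| \<le>o |B| )"
proof -
  let ?r = "|A|"
  have wo: "wo_rel ?r" using card_of_Well_order unfolding wo_rel_def .
  have "\<forall>n. \<exists>a. a \<in> A \<and> |D n| \<le>o |underS ?r a|"
  proof
    fix n
    show "\<exists>a. a \<in> A \<and> |D n| \<le>o |underS ?r a|"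
      by (rule ordLess_imp_ordLeq_underS[OF card_of_Well_order less, unfolded Field_card_of]) blast
  qed
  then obtain a where a: "\<forall>n. a n \<in> A \<and> |D n| \<le>o |underS ?r (a n)|"
    by (rule choice[THEN exE]) blast
  have "range a \<subseteq> A \<and> countable (range a)" using a by blast
  then obtain b where "b \<in> A" "\<forall>x\<in>range a. x \<noteq> b \<and> (x, b) \<in> ?r"
    using cof[unfolded uncountable_cof_def Field_card_of, rule_format, of "range a"] by blast
  then have b: "b \<in> A" "\<And>n. (a n, b) \<in> ?r" by auto
  have bound: "|D n| \<le>o |underS ?r b|" for n
  proof -
    have "underS ?r (a n) \<subseteq> underS ?r b"
      by (rule underS_incr[OF wo_rel.TRANS[OF wo] wo_rel.ANTISYM[OF wo] b(2)])
    then have "|underS ?r (a n)| \<le>o |underS ?r b|" by (rule card_of_mono1)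
    with a show ?thesis by (blast intro: ordLeq_transitive)
  qed
  moreover have "|underS ?r b| <o ?r"
    using card_of_underS[OF card_of_Card_order] b(1) by (simp add: Field_card_of)
  ultimately show ?thesis by blast
qed

lemma card_of_UNION_ordLess_uncountable_cof:
  fixes A :: "'a set" and D :: "nat \<Rightarrow> 'b set"
  assumes cof: "uncountable_cof |A|" and less: "\<And>n. |D n| <o |A|"
  shows "|\<Union>n. D n| <o |A|"
proof -
  obtain B :: "'a set" where B: "|B| <o |A|" "\<And>n. |D n| \<le>o |B|"
    using uncountable_cof_bound[OF cof, of D] less by blast
  show ?thesis
  proof (cases "finite B")
    case True
    then have "finite (D n)" for n
      by (rule card_of_ordLeq_finite[OF B(2)])
    then have "|\<Union>n. D n| \<le>o |UNIV :: nat set|"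
      unfolding countable_card_of_nat[symmetric] by (simp add: countable_finite)
    moreover have "|UNIV :: nat set| <o |A|"
    proof -
      have "\<not> |A| \<le>o |UNIV :: nat set|"
        using uncountable_cof_imp_uncountable[OF cof] countable_card_of_nat by blast
      then show ?thesis
        using not_ordLeq_iff_ordLess[OF card_of_Well_order card_of_Well_order] by blast
    qed
    ultimately show ?thesis by (rule ordLeq_ordLess_trans)
  next
    case False
    then have "|\<Union>n. D n| \<le>o |B|"
      by (rule card_of_UNION_ordLeq_infinite) (use False B(2) infinite_iff_card_of_nat in auto)
    then show ?thesis using B(1) by (rule ordLeq_ordLess_trans)
  qed
qed

subsection \<open>Nets and distinguishable sets\<close>

lemma is_dense_in_self: "is_dense_in W W"
  unfolding is_dense_in_def using closure_subset by blast

lemma is_net_self: "0 \<le> \<epsilon> \<Longrightarrow> is_net \<epsilon> W W"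
  unfolding is_net_def by force

lemma is_net_mono: "is_net \<epsilon> C W \<Longrightarrow> \<epsilon> \<le> \<delta> \<Longrightarrow> is_net \<delta> C W"
  unfolding is_net_def by (force simp: mem_cball)

text \<open>Points of a distinguishable set have disjoint \<open>\<epsilon>/2\<close>-neighbourhoods, each meeting \<open>D\<close>.\<close>
lemma card_of_distinguishable_ordLeq_dense:
  assumes D: "is_dense_in D W" and "\<epsilon> > 0" and A: "A \<subseteq> W" "distinguishable \<epsilon> A"
  shows "|A| \<le>o |D|"
proof -
  have "\<exists>d\<in>D. dist d a < \<epsilon>/2" if "a \<in> A" for a
  proof -
    have "a \<in> closure D" using that A D unfolding is_dense_in_def by blast
    then show ?thesis using half_gt_zero[OF \<open>\<epsilon> > 0\<close>] unfolding closure_approachable by blast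
  qed
  then obtain f where f: "\<And>a. a \<in> A \<Longrightarrow> f a \<in> D \<and> dist (f a) a < \<epsilon>/2" by metis
  have "inj_on f A"
  proof (rule inj_onI, rule ccontr)
    fix x y assume xy: "x \<in> A" "y \<in> A" "f x = f y" "x \<noteq> y"
    then have "\<epsilon> < dist x y" using A(2) unfolding distinguishable_def by blast
    also have "dist x y \<le> dist (f x) x + dist (f y) y"
      using dist_triangle3[of x y "f x"] xy(3) by (simp add: dist_commute)
    finally show False using f[OF xy(1)] f[OF xy(2)] by linarith
  qed
  moreover have "f ` A \<subseteq> D" using f by blast
  ultimately show ?thesis using card_of_ordLeq by blast
qed

lemma maximal_distinguishable_exists:
  "\<exists>A. A \<subseteq> W \<and> distinguishable \<epsilon> A \<and>
     (\<forall>B. A \<subseteq> B \<and> B \<subseteq> W \<and> distinguishable \<epsilon> B \<longrightarrow> B = A)"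
proof -
  define S where "S = {A. A \<subseteq> W \<and> distinguishable \<epsilon> A}"
  have "\<Union>C \<in> S" if "C \<in> chains S" for C
  proof -
    have chain: "chain\<^sub>\<subseteq> C" and "C \<subseteq> S" using that by (auto simp: chains_def)
    have "distinguishable \<epsilon> (\<Union>C)" unfolding distinguishable_def
    proof (intro ballI impI)
      fix x y assume "x \<in> \<Union>C" "y \<in> \<Union>C" "x \<noteq> y"
      then obtain X Y where "X \<in> C" "Y \<in> C" "x \<in> X" "y \<in> Y" by blast
      moreover from this have "X \<subseteq> Y \<or> Y \<subseteq> X" using chain unfolding chain_subset_def by blast
      ultimately show "dist x y > \<epsilon>"
        using \<open>C \<subseteq> S\<close> \<open>x \<noteq> y\<close> unfolding S_def distinguishable_def by blast
    qed
    then show ?thesis using \<open>C \<subseteq> S\<close> unfolding S_def by blast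
  qed
  then obtain M where "M \<in> S" "\<forall>X\<in>S. M \<subseteq> X \<longrightarrow> X = M"
    using Zorn_Lemma[of S] by blast
  then show ?thesis unfolding S_def by blast
qed

lemma maximal_distinguishable_is_net:
  assumes "\<epsilon> > 0" "A \<subseteq> W" "distinguishable \<epsilon> A"
    and maximal: "\<forall>B. A \<subseteq> B \<and> B \<subseteq> W \<and> distinguishable \<epsilon> B \<longrightarrow> B = A"
  shows "is_net \<epsilon> A W"
  unfolding is_net_def
proof
  fix w assume "w \<in> W"
  show "w \<in> (\<Union>c\<in>A. cball c \<epsilon>)"
  proof (rule ccontr)
    assume "w \<notin> (\<Union>c\<in>A. cball c \<epsilon>)"
    then have far: "\<forall>a\<in>A. dist a w > \<epsilon>" by (auto simp: mem_cball)
    then have "w \<notin> A" using \<open>\<epsilon> > 0\<close> by force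
    moreover have "distinguishable \<epsilon> (insert w A)"
      using assms(3) far unfolding distinguishable_def by (auto simp: dist_commute)
    ultimately show False using maximal assms(2) \<open>w \<in> W\<close> by blast
  qed
qed

text \<open>Each net point within distance \<open>1/(n+1)\<close> of \<open>W\<close> is moved to such a point of \<open>W\<close>.\<close>
lemma dense_subset_of_nets:
  assumes nets: "\<And>n. is_net (1 / real (Suc n)) (C n) W"
  shows "\<exists>D. is_dense_in (\<Union>n. D n) W \<and> (\<forall>n. |D n| \<le>o |C n| )"
proof -
  define near where "near n c \<longleftrightarrow> (\<exists>w\<in>W. dist c w \<le> 1 / real (Suc n))" for n c
  define g where "g n c = (SOME w. w \<in> W \<and> dist c w \<le> 1 / real (Suc n))" for n c
  define D where "D n = g n ` {c \<in> C n. near n c}" for n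
  have g: "g n c \<in> W \<and> dist c (g n c) \<le> 1 / real (Suc n)" if "near n c" for n c
    unfolding g_def by (rule someI_ex) (use that in \<open>auto simp: near_def\<close>)
  have "W \<subseteq> closure (\<Union>n. D n)"
  proof
    fix w assume "w \<in> W"
    show "w \<in> closure (\<Union>n. D n)" unfolding closure_approachable
    proof (intro allI impI)
      fix e :: real assume "e > 0"
      then obtain n where n: "1 / real (Suc n) < e / 2"
        using reals_Archimedean[of "e / 2"] by (auto simp: inverse_eq_divide)
      obtain c where c: "c \<in> C n" "dist c w \<le> 1 / real (Suc n)"
        using nets[of n] \<open>w \<in> W\<close> unfolding is_net_def by (auto simp: mem_cball)
      then have "near n c" using \<open>w \<in> W\<close> unfolding near_def by blast
      have "dist (g n c) w \<le> dist c (g n c) + dist c w" by (rule dist_triangle3)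
      then have "dist (g n c) w < e" using g[OF \<open>near n c\<close>] c(2) n by linarith
      moreover have "g n c \<in> (\<Union>n. D n)" using c(1) \<open>near n c\<close> unfolding D_def by blast
      ultimately show "\<exists>y\<in>\<Union>n. D n. dist y w < e" by blast
    qed
  qed
  moreover have "(\<Union>n. D n) \<subseteq> W" unfolding D_def using g by blast
  moreover have "|D n| \<le>o |C n|" for n
  proof -
    have "|D n| \<le>o |{c \<in> C n. near n c}|" unfolding D_def by (rule card_of_image)
    also have "|{c \<in> C n. near n c}| \<le>o |C n|" by (rule card_of_mono1) blast
    finally show ?thesis .
  qed
  ultimately show ?thesis unfolding is_dense_in_def by blast
qed

subsection \<open>Comparison of the cardinal characteristics\<close>

lemma den_ordLeq_card_of_fine_nets:
  assumes cof: "uncountable_cof (den W)"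
  shows "\<exists>n. \<forall>C. is_net (1 / real (Suc n)) C W \<longrightarrow> den W \<le>o |C|"
proof (rule ccontr)
  obtain D0 where D0: "is_dense_in D0 W" "den W = |D0|"
    using is_dense_in_self unfolding den_def by (rule min_card_attained)
  assume "\<not> ?thesis"
  moreover have "|C| <o |D0|" if "\<not> den W \<le>o |C|" for C
    using ordLess_or_ordLeq[OF card_of_Well_order card_of_Well_order, of C D0] that D0(2) by auto
  ultimately have "\<forall>n. \<exists>C. is_net (1 / real (Suc n)) C W \<and> |C| <o |D0|" by blast
  then obtain C where "\<forall>n. is_net (1 / real (Suc n)) (C n) W \<and> |C n| <o |D0|"
    by (rule choice[THEN exE]) blast
  then have C: "\<And>n. is_net (1 / real (Suc n)) (C n) W" "\<And>n. |C n| <o |D0|" by simp_all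
  obtain D where D: "is_dense_in (\<Union>n. D n) W" "\<And>n. |D n| \<le>o |C n|"
    using dense_subset_of_nets[OF C(1)] by blast
  have "|D n| <o |D0|" for n using D(2) C(2) by (rule ordLeq_ordLess_trans)
  then have "|\<Union>n. D n| <o |D0|"
    using cof D0(2) by (intro card_of_UNION_ordLess_uncountable_cof) simp_all
  moreover have "|D0| \<le>o |\<Union>n. D n|"
    using min_card_le[of "\<lambda>D. is_dense_in D W", OF D(1)] D0(2) unfolding den_def by simp
  ultimately show False using not_ordLess_ordLeq by blast
qed

lemma Nhat_antimono:
  assumes "A \<subseteq> B" "W \<subseteq> A" "0 \<le> \<epsilon>"
  shows "Nhat B \<epsilon> W \<le>o Nhat A \<epsilon> W"
proof -
  have "W \<subseteq> A \<and> is_net \<epsilon> W W" using assms(2,3) is_net_self by blast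
  then obtain C where C: "C \<subseteq> A \<and> is_net \<epsilon> C W" "Nhat A \<epsilon> W = |C|"
    unfolding Nhat_def by (rule min_card_attained)
  then have "C \<subseteq> B \<and> is_net \<epsilon> C W" using assms(1) by blast
  then show ?thesis unfolding C(2) unfolding Nhat_def by (rule min_card_le)
qed

lemma Nhat_ordLeq_Mhat:
  assumes "\<epsilon> > 0"
  shows "Nhat W \<epsilon> W \<le>o Mhat \<epsilon> W"
proof -
  let ?maximal = "\<lambda>A. A \<subseteq> W \<and> distinguishable \<epsilon> A \<and>
    (\<forall>B. A \<subseteq> B \<and> B \<subseteq> W \<and> distinguishable \<epsilon> B \<longrightarrow> B = A)"
  obtain A0 where "?maximal A0" using maximal_distinguishable_exists by blast
  then obtain A where A: "?maximal A" "Mhat \<epsilon> W = |A|"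
    unfolding Mhat_def by (rule min_card_attained[of ?maximal A0])
  then have "A \<subseteq> W \<and> is_net \<epsilon> A W"
    using maximal_distinguishable_is_net[OF assms, of A W] by simp
  then show ?thesis unfolding A(2) unfolding Nhat_def by (rule min_card_le)
qed

lemma Mhat_ordLeq_Mstar: "Mhat \<epsilon> W \<le>o Mstar \<epsilon> W"
proof -
  let ?bound = "\<lambda>S. \<forall>A. A \<subseteq> W \<and> distinguishable \<epsilon> A \<longrightarrow> |A| \<le>o |S|"
  have "?bound W" using card_of_mono1 by blast
  then obtain S where S: "?bound S" "Mstar \<epsilon> W = |S|"
    unfolding Mstar_def by (rule min_card_attained[of ?bound W])
  let ?maximal = "\<lambda>A. A \<subseteq> W \<and> distinguishable \<epsilon> A \<and>
    (\<forall>B. A \<subseteq> B \<and> B \<subseteq> W \<and> distinguishable \<epsilon> B \<longrightarrow> B = A)"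
  obtain A where "?maximal A" using maximal_distinguishable_exists by blast
  then have "Mhat \<epsilon> W \<le>o |A|" "|A| \<le>o |S|"
    using min_card_le[of ?maximal A] S(1) unfolding Mhat_def by simp_all
  then show ?thesis unfolding S(2) by (rule ordLeq_transitive)
qed

lemma Mstar_ordLeq_den:
  assumes "\<epsilon> > 0"
  shows "Mstar \<epsilon> W \<le>o den W"
proof -
  obtain D where D: "is_dense_in D W" "den W = |D|"
    using is_dense_in_self unfolding den_def by (rule min_card_attained)
  then have "\<forall>A. A \<subseteq> W \<and> distinguishable \<epsilon> A \<longrightarrow> |A| \<le>o |D|"
    using card_of_distinguishable_ordLeq_dense[OF D(1) assms] by blast
  then show ?thesis unfolding D(2) unfolding Mstar_def by (rule min_card_le)
qed

lemma den_ordLeq_Nhat: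
  assumes "\<forall>C. is_net \<delta> C W \<longrightarrow> den W \<le>o |C|" "0 \<le> \<epsilon>" "\<epsilon> \<le> \<delta>"
  shows "den W \<le>o Nhat UNIV \<epsilon> W"
proof -
  have "W \<subseteq> UNIV \<and> is_net \<epsilon> W W" using is_net_self[OF assms(2)] by blast
  then obtain C where "C \<subseteq> UNIV \<and> is_net \<epsilon> C W" "Nhat UNIV \<epsilon> W = |C|"
    unfolding Nhat_def by (rule min_card_attained)
  then show ?thesis using assms(1,3) is_net_mono[of \<epsilon> C W \<delta>] by simp
qed

theorem theorem2p10:
  fixes W :: "'a::metric_space set"
  assumes "uncountable_cof (den W)"
  shows "\<exists>\<epsilon>0>0. \<forall>\<epsilon>. 0 < \<epsilon> \<and> \<epsilon> < \<epsilon>0 \<longrightarrow>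
           ordIso2 (Nhat UNIV \<epsilon> W) (Nhat W \<epsilon> W) \<and> ordIso2 (Nhat W \<epsilon> W) (Mhat \<epsilon> W) \<and>
           ordIso2 (Mhat \<epsilon> W) (Mstar \<epsilon> W) \<and> ordIso2 (Mstar \<epsilon> W) (den W)"
proof -
  obtain n where n: "\<forall>C. is_net (1 / real (Suc n)) C W \<longrightarrow> den W \<le>o |C|"
    using den_ordLeq_card_of_fine_nets[OF assms] by blast
  show ?thesis
  proof (intro exI[of _ "1 / real (Suc n)"] conjI allI impI)
    fix \<epsilon> :: real assume \<epsilon>: "0 < \<epsilon> \<and> \<epsilon> < 1 / real (Suc n)"
    then have "0 \<le> \<epsilon>" "0 < \<epsilon>" by simp_all
    have "den W \<le>o Nhat UNIV \<epsilon> W" using \<epsilon> by (intro den_ordLeq_Nhat[OF n]) simp_all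
    moreover have "Nhat UNIV \<epsilon> W \<le>o Nhat W \<epsilon> W" by (rule Nhat_antimono) (simp_all add: \<open>0 \<le> \<epsilon>\<close>)
    moreover have "Nhat W \<epsilon> W \<le>o Mhat \<epsilon> W" by (rule Nhat_ordLeq_Mhat) fact
    moreover have "Mhat \<epsilon> W \<le>o Mstar \<epsilon> W" by (rule Mhat_ordLeq_Mstar)
    moreover have "Mstar \<epsilon> W \<le>o den W" by (rule Mstar_ordLeq_den) fact
    ultimately show "ordIso2 (Nhat UNIV \<epsilon> W) (Nhat W \<epsilon> W)" "ordIso2 (Nhat W \<epsilon> W) (Mhat \<epsilon> W)"
      "ordIso2 (Mhat \<epsilon> W) (Mstar \<epsilon> W)" "ordIso2 (Mstar \<epsilon> W) (den W)"
      unfolding ordIso_iff_ordLeq by (blast intro: ordLeq_transitive)+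
  qed simp
qed

end
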